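(* $\operatorname{LLPO}\le_{\mathrm{sW}}\operatorname{Proj}_\mathbb{R}$.
   Context: Represented spaces: a representation of a set $X$ is a partial surjection $\delta_X:\subseteq\mathbb{N}^\mathbb{N}\to X$. For a partial multi-valued function $f:\subseteq X\rightrightarrows Y$, a realizer is a partial $F:\subseteq\mathbb{N}^\mathbb{N}\to\mathbb{N}^\mathbb{N}$ with $\delta_Y(F(p))\in f(\delta_X(p))$ for all $p$ with $\delta_X(p)\in\mathrm{dom}(f)$. Strong Weihrauch reducibility $f\le_{\mathrm{sW}}g$: there are computable partial $H,K:\subseteq\mathbb{N}^\mathbb{N}\to\mathbb{N}^\mathbb{N}$ with $H\circ G\circ K$ a realizer of $f$ for every realizer $G$ of $g$. $\operatorname{LLPO}:\subseteq\mathbb{N}^\mathbb{N}\times\mathbb{N}^\mathbb{N}\rightrightarrows\{0,1\}$: its domain consists of pairs $(p_0,p_1)$ such that there is at most one pair $(j,m)$ with $p_j(m)\ne0$, and $i\in\operatorname{LLPO}(p_0,p_1)$ iff $p_i=0^\mathbb{N}$. $\mathbb{R}$ has the Cauchy representation. $\mathcal{A}(\mathbb{R})$: closed subsets of $\mathbb{R}$ with total information, a name of $A$ consisting of an enumeration of rational open intervals whose union is $\mathbb{R}\setminus A$ together with an enumeration of exactly the rational open intervals meeting $A$. $\operatorname{Proj}_\mathbb{R}:\subseteq\mathbb{R}\times\mathcal{A}(\mathbb{R})\rightrightarrows\mathbb{R}$ maps $(x,A)$ with $A$ nonempty closed to the set of $y\in A$ with $|x-y|=d(x,A)$. *)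

theory Defs
  imports "HOL-Analysis.Analysis" "HOL-Library.Nat_Bijection"
begin

type_synonym baire = "nat \<Rightarrow> nat"

definition prefix :: "baire \<Rightarrow> nat \<Rightarrow> nat list" where
  "prefix p n = map p [0..<n]"

inductive prim_rec :: "nat \<Rightarrow> (nat list \<Rightarrow> nat) \<Rightarrow> bool" where
  pr_zero: "prim_rec n (\<lambda>_. 0)"
| pr_succ: "prim_rec 1 (\<lambda>xs. Suc (hd xs))"
| pr_proj: "i < n \<Longrightarrow> prim_rec n (\<lambda>xs. xs ! i)"
| pr_comp: "prim_rec m f \<Longrightarrow> length gs = m \<Longrightarrow> (\<forall>g\<in>set gs. prim_rec n g)
            \<Longrightarrow> prim_rec n (\<lambda>xs. f (map (\<lambda>g. g xs) gs))"
| pr_rec: "prim_rec n f \<Longrightarrow> prim_rec (Suc (Suc n)) g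
            \<Longrightarrow> prim_rec (Suc n) (\<lambda>xs. rec_nat (f (tl xs)) (\<lambda>k r. g (r # k # tl xs)) (hd xs))"

definition prim_rec1 :: "(nat \<Rightarrow> nat) \<Rightarrow> bool" where
  "prim_rec1 h \<longleftrightarrow> (\<exists>f. prim_rec 1 f \<and> (\<forall>x. h x = f [x]))"

text \<open>A monotone machine: from an input prefix (coded with list_encode) it computes the
  output produced so far (coded with list_encode).\<close>

definition machine_out :: "(nat \<Rightarrow> nat) \<Rightarrow> nat list \<Rightarrow> nat list" where
  "machine_out M w = list_decode (M (list_encode w))"

definition machine_total_on :: "(nat \<Rightarrow> nat) \<Rightarrow> baire \<Rightarrow> bool" where
  "machine_total_on M p \<longleftrightarrow> (\<forall>k. \<exists>n. k < length (machine_out M (prefix p n)))"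

definition machine_result :: "(nat \<Rightarrow> nat) \<Rightarrow> baire \<Rightarrow> baire" where
  "machine_result M p = (\<lambda>k. machine_out M (prefix p (LEAST n. k < length (machine_out M (prefix p n)))) ! k)"

definition computable_partial :: "(baire \<Rightarrow> baire option) \<Rightarrow> bool" where
  "computable_partial F \<longleftrightarrow>
     (\<exists>M. prim_rec1 M
        \<and> (\<forall>v w. (\<exists>u. w = v @ u) \<longrightarrow> (\<exists>u. machine_out M w = machine_out M v @ u))
        \<and> (\<forall>p q. F p = Some q \<longrightarrow> machine_total_on M p \<and> machine_result M p = q))"

text \<open>A representation of X is a partial map baire \<Rightarrow> 'a option (surjectivity is not
  needed in the definition of reducibility).  A partial multi-valued function is
  f :: 'a \<Rightarrow> 'b set with dom f = {x. f x \<noteq> {}}.\<close>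

definition realizer :: "(baire \<Rightarrow> 'a option) \<Rightarrow> (baire \<Rightarrow> 'b option) \<Rightarrow> ('a \<Rightarrow> 'b set)
                         \<Rightarrow> (baire \<Rightarrow> baire option) \<Rightarrow> bool" where
  "realizer dX dY f G \<longleftrightarrow>
     (\<forall>p x. dX p = Some x \<and> f x \<noteq> {} \<longrightarrow>
        (\<exists>q y. G p = Some q \<and> dY q = Some y \<and> y \<in> f x))"

definition sW_reducible ::
  "(baire \<Rightarrow> 'a option) \<Rightarrow> (baire \<Rightarrow> 'b option) \<Rightarrow> ('a \<Rightarrow> 'b set) \<Rightarrow>
   (baire \<Rightarrow> 'c option) \<Rightarrow> (baire \<Rightarrow> 'd option) \<Rightarrow> ('c \<Rightarrow> 'd set) \<Rightarrow> bool" where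
  "sW_reducible dX dY f dZ dW g \<longleftrightarrow>
     (\<exists>H K. computable_partial H \<and> computable_partial K \<and>
        (\<forall>G. realizer dZ dW g G \<longrightarrow>
              realizer dX dY f (\<lambda>p. Option.bind (K p) (\<lambda>r. Option.bind (G r) H))))"

definition rep_baire :: "baire \<Rightarrow> baire option" where
  "rep_baire p = Some p"

definition rep_nat :: "baire \<Rightarrow> nat option" where
  "rep_nat p = Some (p 0)"

definition seq_even :: "baire \<Rightarrow> baire" where "seq_even p = (\<lambda>n. p (2 * n))"
definition seq_odd :: "baire \<Rightarrow> baire" where "seq_odd p = (\<lambda>n. p (2 * n + 1))"

definition rep_prod :: "(baire \<Rightarrow> 'a option) \<Rightarrow> (baire \<Rightarrow> 'b option) \<Rightarrow> baire \<Rightarrow> ('a \<times> 'b) option" where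
  "rep_prod d1 d2 p =
     (case (d1 (seq_even p), d2 (seq_odd p)) of (Some a, Some b) \<Rightarrow> Some (a, b) | _ \<Rightarrow> None)"

definition nuQ :: "nat \<Rightarrow> real" where
  "nuQ n = (case prod_decode n of (i, j) \<Rightarrow> of_int (int_decode i) / of_nat (Suc j))"

definition cauchy_name :: "baire \<Rightarrow> real \<Rightarrow> bool" where
  "cauchy_name p x \<longleftrightarrow> (\<forall>n. \<bar>nuQ (p n) - x\<bar> \<le> (1/2) ^ n)"

definition cauchy_rep :: "baire \<Rightarrow> real option" where
  "cauchy_rep p = (if \<exists>x. cauchy_name p x then Some (THE x. cauchy_name p x) else None)"

definition rat_interval :: "nat \<Rightarrow> real set" where
  "rat_interval k = (case prod_decode k of (a, b) \<Rightarrow> {nuQ a <..< nuQ b})"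

text \<open>Enumerations: value 0 means "nothing", value k+1 enumerates interval number k.
  A name of A is a pair (even/odd components) of an enumeration of intervals with union
  the complement of A and an enumeration of exactly the intervals meeting A.\<close>
definition closed_name :: "baire \<Rightarrow> real set \<Rightarrow> bool" where
  "closed_name p A \<longleftrightarrow>
     closed A \<and>
     \<Union>{rat_interval k | k. \<exists>n. seq_even p n = Suc k} = - A \<and>
     {k. \<exists>n. seq_odd p n = Suc k} = {k. rat_interval k \<inter> A \<noteq> {}}"

definition rep_closed :: "baire \<Rightarrow> real set option" where
  "rep_closed p = (if \<exists>A. closed_name p A then Some (THE A. closed_name p A) else None)"

definition at_most_one_nonzero :: "baire \<Rightarrow> baire \<Rightarrow> bool" where
  "at_most_one_nonzero p0 p1 \<longleftrightarrow>
     (\<forall>j m j' m'. j \<le> (1::nat) \<and> j' \<le> 1 \<and> (if j = 0 then p0 else p1) m \<noteq> 0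
        \<and> (if j' = 0 then p0 else p1) m' \<noteq> 0 \<longrightarrow> j = j' \<and> m = m')"

definition LLPO :: "baire \<times> baire \<Rightarrow> nat set" where
  "LLPO pq = (case pq of (p0, p1) \<Rightarrow>
     (if at_most_one_nonzero p0 p1 then {i. i \<le> 1 \<and> (if i = 0 then p0 else p1) = (\<lambda>_. 0)} else {}))"

definition Proj_R :: "real \<times> real set \<Rightarrow> real set" where
  "Proj_R xA = (case xA of (x, A) \<Rightarrow>
     (if closed A \<and> A \<noteq> {} then {y \<in> A. \<bar>x - y\<bar> = infdist x A} else {}))"

end

theory Submission
  imports Defs
begin

text \<open>Interleave the two inputs of LLPO into one sequence p and let x be \<open>2^-m\<close> if the
  only nonzero entry of p is at position 2m (in \<open>p\<^sub>0\<close>), \<open>-2^-m\<close> if it is at position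
  2m + 1 (in \<open>p\<^sub>1\<close>), and 0 if p vanishes.  As p has at most one nonzero entry, the n-th
  approximation of x only needs the first 2n entries of p, so a Cauchy name of x is
  computable from p; a name of A = {-1, 1} is computable outright.  Every nearest point of A
  to x is 1 if x > 0 and -1 if x < 0, and the first rational (precision 1/2) of any Cauchy
  name of it reveals which, hence which of \<open>p\<^sub>0, p\<^sub>1\<close> is zero.  Both translations are
  computed by monotone machines whose output entries are primitive recursive functions of
  a finite input prefix.\<close>

section \<open>Primitive recursive functions\<close>

text \<open>Agreement with a function of \<open>prim_rec\<close> is only required on argument lists of the
  right length, so that arguments can be written as \<open>xs ! i\<close>.\<close>

definition primrec_fn :: "nat \<Rightarrow> (nat list \<Rightarrow> nat) \<Rightarrow> bool" where
  "primrec_fn n h \<longleftrightarrow> (\<exists>f. prim_rec n f \<and> (\<forall>xs. length xs = n \<longrightarrow> f xs = h xs))"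

lemma primrec_fn_cong:
  "primrec_fn n f \<Longrightarrow> (\<And>xs. length xs = n \<Longrightarrow> f xs = g xs) \<Longrightarrow> primrec_fn n g"
  unfolding primrec_fn_def by auto

lemma primrec_fn_proj: "i < n \<Longrightarrow> primrec_fn n (\<lambda>xs. xs ! i)"
  unfolding primrec_fn_def using pr_proj by blast

lemma primrec_fn_zero: "primrec_fn n (\<lambda>xs. 0)"
  unfolding primrec_fn_def using pr_zero by blast

lemma prim_rec_list_of_primrec_fn:
  "\<forall>g\<in>set gs. primrec_fn n g \<Longrightarrow> \<exists>fs. length fs = length gs \<and> (\<forall>f\<in>set fs. prim_rec n f) \<and>
     (\<forall>xs. length xs = n \<longrightarrow> map (\<lambda>f. f xs) fs = map (\<lambda>g. g xs) gs)"
proof (induction gs)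
  case (Cons g gs)
  then obtain fs where fs: "length fs = length gs" "\<forall>f\<in>set fs. prim_rec n f"
     "\<forall>xs. length xs = n \<longrightarrow> map (\<lambda>f. f xs) fs = map (\<lambda>g. g xs) gs" by auto
  from Cons.prems obtain f where "prim_rec n f" "\<forall>xs. length xs = n \<longrightarrow> f xs = g xs"
    unfolding primrec_fn_def by auto
  with fs show ?case by (intro exI[of _ "f # fs"]) auto
qed simp

lemma primrec_fn_comp:
  assumes "primrec_fn m F" "length gs = m" "\<forall>g\<in>set gs. primrec_fn n g"
  shows "primrec_fn n (\<lambda>xs. F (map (\<lambda>g. g xs) gs))"
proof -
  obtain fF where fF: "prim_rec m fF" "\<forall>xs. length xs = m \<longrightarrow> fF xs = F xs"
    using assms(1) unfolding primrec_fn_def by auto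
  obtain fs where fs: "length fs = length gs" "\<forall>f\<in>set fs. prim_rec n f"
     "\<forall>xs. length xs = n \<longrightarrow> map (\<lambda>f. f xs) fs = map (\<lambda>g. g xs) gs"
    using prim_rec_list_of_primrec_fn[OF assms(3)] by auto
  have "prim_rec n (\<lambda>xs. fF (map (\<lambda>g. g xs) fs))"
    by (rule pr_comp) (use fF fs assms in auto)
  moreover have "fF (map (\<lambda>g. g xs) fs) = F (map (\<lambda>g. g xs) gs)" if "length xs = n" for xs
    using that fs(3) fF(2) assms(2) by simp
  ultimately show ?thesis unfolding primrec_fn_def by blast
qed

lemma primrec_fn_app1:
  assumes "primrec_fn 1 (\<lambda>xs. h (xs ! 0))" "primrec_fn n g"
  shows "primrec_fn n (\<lambda>xs. h (g xs))"
  using primrec_fn_comp[OF assms(1), of "[g]" n] assms(2) by simp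

lemma primrec_fn_app2:
  assumes "primrec_fn 2 (\<lambda>xs. h (xs ! 0) (xs ! 1))" "primrec_fn n g1" "primrec_fn n g2"
  shows "primrec_fn n (\<lambda>xs. h (g1 xs) (g2 xs))"
  using primrec_fn_comp[OF assms(1), of "[g1, g2]" n] assms(2,3) by simp

lemma primrec_fn_Suc: assumes "primrec_fn n g" shows "primrec_fn n (\<lambda>xs. Suc (g xs))"
proof -
  have "primrec_fn 1 (\<lambda>xs. Suc (xs ! 0))"
    unfolding primrec_fn_def using pr_succ
    by (intro exI[of _ "\<lambda>xs. Suc (hd xs)"]) (auto simp: length_Suc_conv)
  from primrec_fn_app1[where h=Suc, OF this assms] show ?thesis .
qed

lemma primrec_fn_const: "primrec_fn n (\<lambda>xs. c)"
  by (induction c) (auto intro: primrec_fn_zero primrec_fn_Suc)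

lemmas primrec_fn_basic = primrec_fn_proj primrec_fn_const primrec_fn_Suc

lemma primrec_fn_rec_nat:
  assumes "primrec_fn 1 A" "primrec_fn 3 B"
  shows "primrec_fn 2 (\<lambda>xs. rec_nat (A [xs ! 1]) (\<lambda>k r. B [r, k, xs ! 1]) (xs ! 0))"
proof -
  obtain f where f: "prim_rec 1 f" "\<forall>xs. length xs = 1 \<longrightarrow> f xs = A xs"
    using assms unfolding primrec_fn_def by auto
  obtain g where g: "prim_rec 3 g" "\<forall>xs. length xs = 3 \<longrightarrow> g xs = B xs"
    using assms unfolding primrec_fn_def by auto
  have "prim_rec (Suc 1) (\<lambda>xs. rec_nat (f (tl xs)) (\<lambda>k r. g (r # k # tl xs)) (hd xs))"
    using pr_rec[OF f(1)] g(1) by (simp add: numeral_3_eq_3)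
  moreover have "rec_nat (f (tl xs)) (\<lambda>k r. g (r # k # tl xs)) (hd xs)
      = rec_nat (A [xs ! 1]) (\<lambda>k r. B [r, k, xs ! 1]) (xs ! 0)" if "length xs = 2" for xs
  proof -
    from that obtain x y where xs: "xs = [x, y]"
      by (auto simp: length_Suc_conv numeral_2_eq_2)
    have "rec_nat (A [y]) (\<lambda>k r. g [r, k, y]) x = rec_nat (A [y]) (\<lambda>k r. B [r, k, y]) x"
      by (induction x) (auto simp: g(2))
    then show ?thesis using f(2) xs by simp
  qed
  ultimately show ?thesis unfolding primrec_fn_def One_nat_def[symmetric] Suc_1 by blast
qed

lemma primrec_fn_rec_nat_unary:
  assumes "primrec_fn 2 B"
  shows "primrec_fn 1 (\<lambda>xs. rec_nat a (\<lambda>k r. B [r, k]) (xs ! 0))"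
proof -
  have "primrec_fn 3 (\<lambda>ys. B [ys ! 0, ys ! 1])"
    using primrec_fn_comp[OF assms, of "[\<lambda>ys. ys ! 0, \<lambda>ys. ys ! 1]" 3]
    by (simp add: primrec_fn_proj)
  from primrec_fn_rec_nat[OF primrec_fn_const this]
  have "primrec_fn 2 (\<lambda>xs. rec_nat a (\<lambda>k r. B [r, k]) (xs ! 0))" by simp
  from primrec_fn_app2[where h="\<lambda>u v. rec_nat a (\<lambda>k r. B [r, k]) u",
      OF this primrec_fn_proj[of 0 1] primrec_fn_zero]
  show ?thesis by simp
qed

lemma primrec_fn_add:
  assumes "primrec_fn n g1" "primrec_fn n g2" shows "primrec_fn n (\<lambda>xs. g1 xs + g2 xs)"
proof -
  have "primrec_fn 1 (\<lambda>xs. xs ! 0)" "primrec_fn 3 (\<lambda>ys. Suc (ys ! 0))"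
    by (intro primrec_fn_basic; simp)+
  from primrec_fn_rec_nat[OF this]
  have "primrec_fn 2 (\<lambda>xs. rec_nat (xs ! 1) (\<lambda>k r. Suc r) (xs ! 0))" by simp
  moreover have "rec_nat y (\<lambda>k r. Suc r) x = x + y" for x y :: nat by (induction x) auto
  ultimately have "primrec_fn 2 (\<lambda>xs. xs ! 0 + xs ! 1)" by simp
  from primrec_fn_app2[where h="(+)", OF this assms] show ?thesis .
qed

lemma primrec_fn_mult:
  assumes "primrec_fn n g1" "primrec_fn n g2" shows "primrec_fn n (\<lambda>xs. g1 xs * g2 xs)"
proof -
  have "primrec_fn 3 (\<lambda>ys. ys ! 0 + ys ! 2)" by (intro primrec_fn_add primrec_fn_basic) simp_all
  from primrec_fn_rec_nat[OF primrec_fn_zero this]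
  have "primrec_fn 2 (\<lambda>xs. rec_nat 0 (\<lambda>k r. r + xs ! 1) (xs ! 0))" by simp
  moreover have "rec_nat 0 (\<lambda>k r. r + y) x = x * y" for x y :: nat by (induction x) auto
  ultimately have "primrec_fn 2 (\<lambda>xs. xs ! 0 * xs ! 1)" by simp
  from primrec_fn_app2[where h="(*)", OF this assms] show ?thesis .
qed

lemma primrec_fn_pred: assumes "primrec_fn n g" shows "primrec_fn n (\<lambda>xs. g xs - 1)"
proof -
  have "primrec_fn 2 (\<lambda>ys. ys ! 1)" by (intro primrec_fn_basic) simp
  from primrec_fn_rec_nat_unary[OF this]
  have "primrec_fn 1 (\<lambda>xs. rec_nat 0 (\<lambda>k r. k) (xs ! 0))" by simp
  moreover have "rec_nat 0 (\<lambda>k r. k) x = x - 1" for x :: nat by (cases x) auto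
  ultimately have "primrec_fn 1 (\<lambda>xs. xs ! 0 - 1)" by simp
  from primrec_fn_app1[where h="\<lambda>x. x - 1", OF this assms] show ?thesis .
qed

lemma primrec_fn_diff:
  assumes "primrec_fn n g1" "primrec_fn n g2" shows "primrec_fn n (\<lambda>xs. g1 xs - g2 xs)"
proof -
  have "primrec_fn 1 (\<lambda>xs. xs ! 0)" "primrec_fn 3 (\<lambda>ys. ys ! 0 - 1)"
    by (intro primrec_fn_basic primrec_fn_pred; simp)+
  from primrec_fn_rec_nat[OF this]
  have "primrec_fn 2 (\<lambda>xs. rec_nat (xs ! 1) (\<lambda>k r. r - 1) (xs ! 0))" by simp
  moreover have "rec_nat y (\<lambda>k r. r - 1) x = y - x" for x y :: nat by (induction x) auto
  ultimately have "primrec_fn 2 (\<lambda>xs. xs ! 1 - xs ! 0)" by simp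
  from primrec_fn_app2[where h="\<lambda>u v. v - u", OF this assms(2,1)] show ?thesis by simp
qed

lemma primrec_fn_if_zero:
  assumes "primrec_fn n c" "primrec_fn n a" "primrec_fn n b"
  shows "primrec_fn n (\<lambda>xs. if c xs = 0 then a xs else b xs)"
proof -
  have "primrec_fn n (\<lambda>xs. a xs * (1 - c xs) + b xs * (1 - (1 - c xs)))"
    by (intro primrec_fn_add primrec_fn_mult primrec_fn_diff primrec_fn_const assms)
  then show ?thesis by (rule primrec_fn_cong) auto
qed

lemma primrec_fn_if_le:
  assumes "primrec_fn n c1" "primrec_fn n c2" "primrec_fn n a" "primrec_fn n b"
  shows "primrec_fn n (\<lambda>xs. if c1 xs \<le> c2 xs then a xs else b xs)"
proof -
  have "primrec_fn n (\<lambda>xs. if c1 xs - c2 xs = 0 then a xs else b xs)"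
    by (intro primrec_fn_if_zero primrec_fn_diff assms)
  then show ?thesis by (rule primrec_fn_cong) auto
qed

lemma primrec_fn_if_less:
  assumes "primrec_fn n c1" "primrec_fn n c2" "primrec_fn n a" "primrec_fn n b"
  shows "primrec_fn n (\<lambda>xs. if c1 xs < c2 xs then a xs else b xs)"
proof -
  have "primrec_fn n (\<lambda>xs. if c2 xs - c1 xs = 0 then b xs else a xs)"
    by (intro primrec_fn_if_zero primrec_fn_diff assms)
  then show ?thesis by (rule primrec_fn_cong) auto
qed

lemma primrec_fn_mod_2: assumes "primrec_fn n g" shows "primrec_fn n (\<lambda>xs. g xs mod 2)"
proof -
  have "primrec_fn 2 (\<lambda>ys. 1 - ys ! 0)" by (intro primrec_fn_basic primrec_fn_diff) simp
  from primrec_fn_rec_nat_unary[OF this]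
  have "primrec_fn 1 (\<lambda>xs. rec_nat 0 (\<lambda>k r. 1 - r) (xs ! 0))" by simp
  moreover have "rec_nat 0 (\<lambda>k r. 1 - r) x = x mod 2" for x :: nat
    by (induction x) (auto simp: mod_Suc)
  ultimately have "primrec_fn 1 (\<lambda>xs. xs ! 0 mod 2)" by simp
  from primrec_fn_app1[where h="\<lambda>x. x mod 2", OF this assms] show ?thesis .
qed

lemma primrec_fn_div_2: assumes "primrec_fn n g" shows "primrec_fn n (\<lambda>xs. g xs div 2)"
proof -
  have "primrec_fn 2 (\<lambda>ys. ys ! 0 + ys ! 1 mod 2)"
    by (intro primrec_fn_basic primrec_fn_add primrec_fn_mod_2) simp_all
  from primrec_fn_rec_nat_unary[OF this]
  have "primrec_fn 1 (\<lambda>xs. rec_nat 0 (\<lambda>k r. r + k mod 2) (xs ! 0))" by simp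
  moreover have "rec_nat 0 (\<lambda>k r. r + k mod 2) x = x div 2" for x :: nat
    by (induction x) (auto simp: div_Suc mod_Suc)
  ultimately have "primrec_fn 1 (\<lambda>xs. xs ! 0 div 2)" by simp
  from primrec_fn_app1[where h="\<lambda>x. x div 2", OF this assms] show ?thesis .
qed

lemma primrec_fn_if_even:
  assumes "primrec_fn n c" "primrec_fn n a" "primrec_fn n b"
  shows "primrec_fn n (\<lambda>xs. if even (c xs) then a xs else b xs)"
proof -
  have "primrec_fn n (\<lambda>xs. if c xs mod 2 = 0 then a xs else b xs)"
    by (intro primrec_fn_if_zero primrec_fn_mod_2 assms)
  then show ?thesis by (rule primrec_fn_cong) auto
qed

lemma primrec_fn_power_2: assumes "primrec_fn n g" shows "primrec_fn n (\<lambda>xs. (2::nat) ^ g xs)"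
proof -
  have "primrec_fn 2 (\<lambda>ys. ys ! 0 + ys ! 0)" by (intro primrec_fn_basic primrec_fn_add) simp_all
  from primrec_fn_rec_nat_unary[OF this]
  have "primrec_fn 1 (\<lambda>xs. rec_nat 1 (\<lambda>k r. r + r) (xs ! 0))" by simp
  moreover have "rec_nat 1 (\<lambda>k r. r + r) x = (2::nat) ^ x" for x :: nat by (induction x) auto
  ultimately have "primrec_fn 1 (\<lambda>xs. (2::nat) ^ (xs ! 0))" by simp
  from primrec_fn_app1[where h="\<lambda>x. (2::nat) ^ x", OF this assms] show ?thesis .
qed

lemmas primrec_fn_arith_intros = primrec_fn_basic primrec_fn_add primrec_fn_mult primrec_fn_diff
  primrec_fn_if_zero primrec_fn_if_le primrec_fn_if_less primrec_fn_mod_2 primrec_fn_div_2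
  primrec_fn_if_even primrec_fn_power_2

section \<open>Coding of pairs and lists\<close>

lemma primrec_fn_triangle:
  assumes "primrec_fn n g" shows "primrec_fn n (\<lambda>xs. triangle (g xs))"
proof -
  have "primrec_fn n (\<lambda>xs. (g xs * Suc (g xs)) div 2)" by (intro primrec_fn_arith_intros assms)
  then show ?thesis by (simp add: triangle_def)
qed

lemma primrec_fn_prod_encode:
  assumes "primrec_fn n g1" "primrec_fn n g2"
  shows "primrec_fn n (\<lambda>xs. prod_encode (g1 xs, g2 xs))"
proof -
  have "primrec_fn n (\<lambda>xs. triangle (g1 xs + g2 xs) + g1 xs)"
    by (intro primrec_fn_arith_intros primrec_fn_triangle assms)
  then show ?thesis by (simp add: prod_encode_def)
qed

text \<open>The greatest \<open>t \<le> k\<close> with \<open>triangle t \<le> n\<close>; as \<open>t \<le> triangle t\<close>, taking \<open>k = n\<close>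
  gives the greatest such \<open>t\<close> overall.\<close>

definition triangle_root :: "nat \<Rightarrow> nat \<Rightarrow> nat" where
  "triangle_root k n = rec_nat 0 (\<lambda>k r. if triangle (Suc r) \<le> n then Suc r else r) k"

lemma triangle_mono: "a \<le> b \<Longrightarrow> triangle a \<le> triangle b"
  by (induction b) (auto simp: le_Suc_eq)

lemma triangle_root_greatest:
  "triangle (triangle_root k n) \<le> n \<and> (\<forall>t. t \<le> k \<and> triangle t \<le> n \<longrightarrow> t \<le> triangle_root k n)"
proof (induction k)
  case (Suc k)
  let ?r = "triangle_root k n"
  have step: "triangle_root (Suc k) n = (if triangle (Suc ?r) \<le> n then Suc ?r else ?r)"
    by (simp add: triangle_root_def)
  show ?case
  proof (cases "triangle (Suc ?r) \<le> n")
    case True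
    then show ?thesis using Suc by (auto simp: step le_Suc_eq)
  next
    case False
    have "t \<le> ?r" if "triangle t \<le> n" for t
      using False that triangle_mono[of "Suc ?r" t] by (cases "t \<le> ?r") auto
    then show ?thesis using Suc False by (simp add: step)
  qed
qed (simp add: triangle_root_def)

lemma prod_decode_triangle_root:
  fixes n :: nat
  defines "s \<equiv> triangle_root n n"
  shows "prod_decode n = (n - triangle s, s - (n - triangle s))"
proof -
  have le: "triangle s \<le> n" using triangle_root_greatest unfolding s_def by blast
  have "n < triangle (Suc s)"
  proof (rule ccontr)
    assume "\<not> n < triangle (Suc s)"
    then have "triangle (Suc s) \<le> n" by simp
    moreover have "Suc s \<le> triangle (Suc s)" by (induction s) auto
    ultimately have "Suc s \<le> s"
      using triangle_root_greatest[of n n] unfolding s_def by (meson order_trans)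
    then show False by simp
  qed
  then have "prod_encode (n - triangle s, s - (n - triangle s)) = n"
    using le by (simp add: prod_encode_def)
  then show ?thesis by (metis prod_encode_inverse)
qed

lemma primrec_fn_triangle_root:
  assumes "primrec_fn n g" shows "primrec_fn n (\<lambda>xs. triangle_root (g xs) (g xs))"
proof -
  have "primrec_fn 3 (\<lambda>ys. if triangle (Suc (ys ! 0)) \<le> ys ! 2 then Suc (ys ! 0) else ys ! 0)"
    by (intro primrec_fn_arith_intros primrec_fn_triangle) simp_all
  from primrec_fn_rec_nat[OF primrec_fn_zero this]
  have "primrec_fn 2 (\<lambda>xs. triangle_root (xs ! 0) (xs ! 1))"
    by (simp add: triangle_root_def cong: if_cong)
  from primrec_fn_app2[where h=triangle_root, OF this assms assms] show ?thesis .
qed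

lemma primrec_fn_fst_prod_decode:
  assumes "primrec_fn n g" shows "primrec_fn n (\<lambda>xs. fst (prod_decode (g xs)))"
proof -
  have "primrec_fn n (\<lambda>xs. g xs - triangle (triangle_root (g xs) (g xs)))"
    by (intro primrec_fn_arith_intros primrec_fn_triangle primrec_fn_triangle_root assms)
  then show ?thesis by (simp add: prod_decode_triangle_root)
qed

lemma primrec_fn_snd_prod_decode:
  assumes "primrec_fn n g" shows "primrec_fn n (\<lambda>xs. snd (prod_decode (g xs)))"
proof -
  have "primrec_fn n (\<lambda>xs. triangle_root (g xs) (g xs)
      - (g xs - triangle (triangle_root (g xs) (g xs))))"
    by (intro primrec_fn_arith_intros primrec_fn_triangle primrec_fn_triangle_root assms)
  then show ?thesis by (simp add: prod_decode_triangle_root)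
qed

text \<open>Recall \<open>list_encode [] = 0\<close> and
  \<open>list_encode (x # w) = Suc (prod_encode (x, list_encode w))\<close>.\<close>

definition code_tl :: "nat \<Rightarrow> nat" where "code_tl c = snd (prod_decode (c - 1))"
definition code_hd :: "nat \<Rightarrow> nat" where "code_hd c = fst (prod_decode (c - 1))"
definition code_drop :: "nat \<Rightarrow> nat \<Rightarrow> nat" where "code_drop j c = rec_nat c (\<lambda>k r. code_tl r) j"
definition code_nth :: "nat \<Rightarrow> nat \<Rightarrow> nat" where "code_nth c j = code_hd (code_drop j c)"
definition code_length :: "nat \<Rightarrow> nat" where
  "code_length c = rec_nat 0 (\<lambda>k r. r + (if code_drop k c = 0 then 0 else 1)) c"

lemma list_encode_eq_0_iff: "list_encode w = 0 \<longleftrightarrow> w = []"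
  by (cases w) auto

lemma prod_decode_0: "prod_decode 0 = (0, 0)"
  using prod_encode_inverse[of "(0, 0)"] by (simp add: prod_encode_def)

lemma code_tl_list_encode: "code_tl (list_encode w) = list_encode (tl w)"
  by (cases w) (auto simp: code_tl_def prod_decode_0)

lemma code_drop_list_encode: "code_drop j (list_encode w) = list_encode (drop j w)"
  by (induction j) (auto simp: code_drop_def code_tl_list_encode drop_Suc tl_drop)

lemma code_nth_list_encode: "j < length w \<Longrightarrow> code_nth (list_encode w) j = w ! j"
  by (cases "drop j w")
    (auto simp: code_nth_def code_hd_def code_drop_list_encode hd_drop_conv_nth[symmetric])

lemma length_le_list_encode: "length w \<le> list_encode w"
proof (induction w)
  case (Cons x w) then show ?case using le_prod_encode_2[of "list_encode w" x] by simp
qed simp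

lemma code_length_list_encode: "code_length (list_encode w) = length w"
proof -
  have "rec_nat 0 (\<lambda>k r. r + (if code_drop k (list_encode w) = 0 then 0 else 1)) m
      = min m (length w)" for m
    by (induction m) (auto simp: code_drop_list_encode list_encode_eq_0_iff)
  then show ?thesis using length_le_list_encode[of w] by (simp add: code_length_def)
qed

lemma primrec_fn_code_drop:
  assumes "primrec_fn n g1" "primrec_fn n g2"
  shows "primrec_fn n (\<lambda>xs. code_drop (g1 xs) (g2 xs))"
proof -
  have "primrec_fn 1 (\<lambda>xs. xs ! 0)" "primrec_fn 3 (\<lambda>ys. snd (prod_decode (ys ! 0 - 1)))"
    by (intro primrec_fn_arith_intros primrec_fn_snd_prod_decode; simp)+
  from primrec_fn_rec_nat[OF this]
  have "primrec_fn 2 (\<lambda>xs. code_drop (xs ! 0) (xs ! 1))" by (simp add: code_drop_def code_tl_def)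
  from primrec_fn_app2[where h=code_drop, OF this assms] show ?thesis .
qed

lemma primrec_fn_code_nth:
  assumes "primrec_fn n g1" "primrec_fn n g2"
  shows "primrec_fn n (\<lambda>xs. code_nth (g1 xs) (g2 xs))"
proof -
  have "primrec_fn n (\<lambda>xs. fst (prod_decode (code_drop (g2 xs) (g1 xs) - 1)))"
    by (intro primrec_fn_arith_intros primrec_fn_fst_prod_decode primrec_fn_code_drop assms)
  then show ?thesis by (simp add: code_nth_def code_hd_def)
qed

lemma primrec_fn_code_length:
  assumes "primrec_fn n g" shows "primrec_fn n (\<lambda>xs. code_length (g xs))"
proof -
  have "primrec_fn 3 (\<lambda>ys. ys ! 0 + (if code_drop (ys ! 1) (ys ! 2) = 0 then 0 else 1))"
    by (intro primrec_fn_arith_intros primrec_fn_code_drop) simp_all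
  from primrec_fn_rec_nat[OF primrec_fn_zero this]
  have "primrec_fn 2 (\<lambda>xs. rec_nat 0 (\<lambda>k r. r + (if code_drop k (xs ! 1) = 0 then 0 else 1)) (xs ! 0))"
    by simp
  from primrec_fn_app2[OF this assms assms] show ?thesis by (simp add: code_length_def)
qed

lemmas primrec_fn_intros = primrec_fn_arith_intros primrec_fn_prod_encode
  primrec_fn_fst_prod_decode primrec_fn_snd_prod_decode primrec_fn_code_nth primrec_fn_code_length

section \<open>Computable maps given by primitive recursive output entries\<close>

lemma prim_rec1_iff_primrec_fn: "prim_rec1 h \<longleftrightarrow> primrec_fn 1 (\<lambda>xs. h (xs ! 0))"
proof -
  have "(\<forall>x. h x = f [x]) \<longleftrightarrow> (\<forall>xs. length xs = 1 \<longrightarrow> f xs = h (xs ! 0))" for f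
    by (auto simp: length_Suc_conv)
  then show ?thesis unfolding prim_rec1_def primrec_fn_def by simp
qed

definition code_map_suffix :: "(nat \<Rightarrow> nat) \<Rightarrow> nat \<Rightarrow> nat \<Rightarrow> nat" where
  "code_map_suffix e L k = rec_nat 0 (\<lambda>k r. Suc (prod_encode (e (L - Suc k), r))) k"

lemma code_map_suffix_eq:
  "k \<le> L \<Longrightarrow> code_map_suffix e L k = list_encode (map e [L - k..<L])"
proof (induction k)
  case (Suc k)
  then have "[L - Suc k..<L] = (L - Suc k) # [L - k..<L]"
    using upt_conv_Cons[of "L - Suc k" L] by (simp add: Suc_diff_Suc)
  then show ?case using Suc by (simp add: code_map_suffix_def)
qed (simp add: code_map_suffix_def)

lemma prim_rec1_code_map_suffix:
  fixes E :: "nat \<Rightarrow> (nat \<Rightarrow> nat) \<Rightarrow> nat" and Lf :: "nat \<Rightarrow> nat"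
  assumes pr: "primrec_fn 2 (\<lambda>xs. E (xs ! 0) (code_nth (xs ! 1)))"
    and prL: "primrec_fn 1 (\<lambda>xs. Lf (xs ! 0))"
  shows "prim_rec1 (\<lambda>c. code_map_suffix (\<lambda>i. E i (code_nth c)) (Lf (code_length c)) (Lf (code_length c)))"
proof -
  have PE: "primrec_fn n (\<lambda>xs. E (g1 xs) (code_nth (g2 xs)))"
    if "primrec_fn n g1" "primrec_fn n g2" for n g1 g2
    using primrec_fn_app2[where h="\<lambda>a b. E a (code_nth b)", OF pr that] by simp
  have PL: "primrec_fn n (\<lambda>xs. Lf (g xs))" if "primrec_fn n g" for n g
    using primrec_fn_app1[where h=Lf, OF prL that] .
  have "primrec_fn 3 (\<lambda>ys. Suc (prod_encode
      (E (Lf (code_length (ys ! 2)) - Suc (ys ! 1)) (code_nth (ys ! 2)), ys ! 0)))"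
    by (intro primrec_fn_intros PE PL) simp_all
  from primrec_fn_rec_nat[OF primrec_fn_zero this]
  have "primrec_fn 2 (\<lambda>xs. rec_nat 0 (\<lambda>k r. Suc (prod_encode
      (E (Lf (code_length (xs ! 1)) - Suc k) (code_nth (xs ! 1)), r))) (xs ! 0))"
    by simp
  from primrec_fn_app2[where h="\<lambda>a c. rec_nat 0 (\<lambda>k r. Suc (prod_encode
      (E (Lf (code_length c) - Suc k) (code_nth c), r))) a",
      OF this PL[OF primrec_fn_code_length[OF primrec_fn_proj[of 0 1]]] primrec_fn_proj[of 0 1]]
  show ?thesis by (simp add: prim_rec1_iff_primrec_fn code_map_suffix_def primrec_fn_proj)
qed

lemma monotone_machine_of_primrec:
  fixes E :: "nat \<Rightarrow> (nat \<Rightarrow> nat) \<Rightarrow> nat" and Lf :: "nat \<Rightarrow> nat"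
  assumes pr: "primrec_fn 2 (\<lambda>xs. E (xs ! 0) (code_nth (xs ! 1)))"
    and prL: "primrec_fn 1 (\<lambda>xs. Lf (xs ! 0))"
    and local: "\<And>i f g l. i < Lf l \<Longrightarrow> (\<And>j. j < l \<Longrightarrow> f j = g j) \<Longrightarrow> E i f = E i g"
    and mono: "mono Lf"
  shows "\<exists>M. prim_rec1 M \<and> (\<forall>v u. \<exists>u'. machine_out M (v @ u) = machine_out M v @ u')
    \<and> (\<forall>w. machine_out M w = map (\<lambda>i. E i (nth w)) [0..<Lf (length w)])"
proof -
  define M where
    "M c = code_map_suffix (\<lambda>i. E i (code_nth c)) (Lf (code_length c)) (Lf (code_length c))" for c
  have "prim_rec1 M"
    unfolding M_def[abs_def] using pr prL by (rule prim_rec1_code_map_suffix)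
  moreover have out: "machine_out M w = map (\<lambda>i. E i (nth w)) [0..<Lf (length w)]" for w
  proof -
    have "machine_out M w = map (\<lambda>i. E i (code_nth (list_encode w))) [0..<Lf (length w)]"
      by (simp add: machine_out_def M_def code_length_list_encode code_map_suffix_eq)
    also have "\<dots> = map (\<lambda>i. E i (nth w)) [0..<Lf (length w)]"
      by (rule map_cong[OF refl]) (auto intro!: local simp: code_nth_list_encode)
    finally show ?thesis .
  qed
  moreover have "\<exists>u'. machine_out M (v @ u) = machine_out M v @ u'" for v u
  proof -
    let ?w = "v @ u"
    have "Lf (length v) \<le> Lf (length ?w)" using mono by (simp add: monoD)
    then have "[0..<Lf (length ?w)] = [0..<Lf (length v)] @ [Lf (length v)..<Lf (length ?w)]"
      by (metis le_add_diff_inverse upt_add_eq_append zero_le)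
    moreover have "map (\<lambda>i. E i (nth ?w)) [0..<Lf (length v)]
        = map (\<lambda>i. E i (nth v)) [0..<Lf (length v)]"
      by (rule map_cong[OF refl]) (auto intro!: local simp: nth_append)
    ultimately show ?thesis by (simp add: out)
  qed
  ultimately show ?thesis by blast
qed

lemma computable_partial_pointwise:
  fixes E :: "nat \<Rightarrow> (nat \<Rightarrow> nat) \<Rightarrow> nat" and Lf :: "nat \<Rightarrow> nat"
  assumes "primrec_fn 2 (\<lambda>xs. E (xs ! 0) (code_nth (xs ! 1)))"
    and "primrec_fn 1 (\<lambda>xs. Lf (xs ! 0))"
    and local: "\<And>i f g l. i < Lf l \<Longrightarrow> (\<And>j. j < l \<Longrightarrow> f j = g j) \<Longrightarrow> E i f = E i g"
    and "mono Lf"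
    and unbounded: "\<And>k. \<exists>n. k < Lf n"
  shows "computable_partial (\<lambda>p. Some (\<lambda>k. E k p))"
proof -
  have "\<exists>M. prim_rec1 M \<and> (\<forall>v u. \<exists>u'. machine_out M (v @ u) = machine_out M v @ u')
    \<and> (\<forall>w. machine_out M w = map (\<lambda>i. E i (nth w)) [0..<Lf (length w)])"
    by (rule monotone_machine_of_primrec[OF assms(1,2) _ assms(4)]) (fact local)
  then obtain M where M: "prim_rec1 M" "\<forall>v u. \<exists>u'. machine_out M (v @ u) = machine_out M v @ u'"
    "\<forall>w. machine_out M w = map (\<lambda>i. E i (nth w)) [0..<Lf (length w)]"
    by blast
  have out: "machine_out M (prefix p n) = map (\<lambda>i. E i p) [0..<Lf n]" for p n
    using M(3) by (auto intro!: local simp: prefix_def)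
  have total: "machine_total_on M p" for p
    unfolding machine_total_on_def using unbounded by (simp add: out)
  have "machine_result M p = (\<lambda>k. E k p)" for p
  proof
    fix k
    let ?N = "LEAST n. k < length (machine_out M (prefix p n))"
    have "k < length (machine_out M (prefix p ?N))"
      by (rule LeastI_ex) (use total[of p] in \<open>auto simp: machine_total_on_def\<close>)
    then show "machine_result M p k = E k p"
      unfolding machine_result_def by (simp add: out)
  qed
  then show ?thesis unfolding computable_partial_def using M(1,2) total by blast
qed

section \<open>Names of reals and of closed sets\<close>

lemma cauchy_name_unique: "cauchy_name p x \<Longrightarrow> cauchy_name p y \<Longrightarrow> x = y"
proof (rule ccontr)
  assume x: "cauchy_name p x" and y: "cauchy_name p y" and "x \<noteq> y"
  then have "\<bar>x - y\<bar> / 2 > 0" by simp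
  then obtain n where n: "(1/2::real) ^ n < \<bar>x - y\<bar> / 2"
    using real_arch_pow_inv[of "\<bar>x - y\<bar> / 2" "1/2"] by force
  have "\<bar>nuQ (p n) - x\<bar> \<le> (1/2) ^ n" "\<bar>nuQ (p n) - y\<bar> \<le> (1/2) ^ n"
    using x y unfolding cauchy_name_def by blast+
  moreover have "\<bar>x - y\<bar> \<le> \<bar>nuQ (p n) - x\<bar> + \<bar>nuQ (p n) - y\<bar>" by linarith
  ultimately have "\<bar>x - y\<bar> \<le> 2 * (1/2::real) ^ n" by simp
  with n show False by simp
qed

lemma cauchy_rep_eqI: "cauchy_name p x \<Longrightarrow> cauchy_rep p = Some x"
  unfolding cauchy_rep_def using cauchy_name_unique by (auto intro!: the_equality)

lemma cauchy_rep_SomeD: "cauchy_rep p = Some y \<Longrightarrow> cauchy_name p y"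
  unfolding cauchy_rep_def using cauchy_name_unique by (auto split: if_splits intro: theI2)

lemma rep_closed_eqI:
  assumes A: "closed_name p A" shows "rep_closed p = Some A"
proof -
  have "B = A" if "closed_name p B" for B
  proof -
    have "- B = - A" using A that unfolding closed_name_def by simp
    then show ?thesis by simp
  qed
  then have "(THE A. closed_name p A) = A" using A by (intro the_equality)
  then show ?thesis unfolding rep_closed_def using A by auto
qed

definition interleave :: "baire \<Rightarrow> baire \<Rightarrow> baire" where
  "interleave a b i = (if even i then a (i div 2) else b (i div 2))"

lemma seq_even_interleave [simp]: "seq_even (interleave a b) = a"
  and seq_odd_interleave [simp]: "seq_odd (interleave a b) = b"
  by (simp_all add: interleave_def seq_even_def seq_odd_def)

lemma rep_prod_interleave:
  "d1 a = Some x \<Longrightarrow> d2 b = Some y \<Longrightarrow> rep_prod d1 d2 (interleave a b) = Some (x, y)"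
  by (simp add: rep_prod_def)

lemma int_decode_eq_if: "int_decode n = (if even n then int (n div 2) else - int (n div 2) - 1)"
  by (simp add: int_decode_def sum_decode_def)

lemma nuQ_eq:
  "nuQ n = real_of_int (int_decode (fst (prod_decode n))) / real (Suc (snd (prod_decode n)))"
  by (simp add: nuQ_def split: prod.split)

lemma nuQ_0: "nuQ 0 = 0"
  by (simp add: nuQ_def prod_decode_0 int_decode_eq_if)

lemma nuQ_nonneg_iff: "0 \<le> nuQ c \<longleftrightarrow> even (fst (prod_decode c))"
  by (auto simp: nuQ_eq int_decode_eq_if zero_le_divide_iff)

lemma nuQ_onto_Rats: "r \<in> \<rat> \<Longrightarrow> \<exists>n. nuQ n = r"
proof -
  assume "r \<in> \<rat>"
  then obtain a b where "b > 0" "r = of_int a / of_int b" using Rats_cases' by metis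
  then have "nuQ (prod_encode (int_encode a, nat b - 1)) = r" by (simp add: nuQ_def)
  then show ?thesis by blast
qed

lemma rat_interval_in_ball:
  assumes "d > 0" shows "\<exists>k. z \<in> rat_interval k \<and> rat_interval k \<subseteq> ball z d"
proof -
  obtain qa qb where "qa \<in> \<rat>" "z - d < qa" "qa < z" "qb \<in> \<rat>" "z < qb" "qb < z + d"
    using Rats_dense_in_real[of "z - d" z] Rats_dense_in_real[of z "z + d"] assms by auto
  moreover obtain na nb where "nuQ na = qa" "nuQ nb = qb"
    using nuQ_onto_Rats[OF \<open>qa \<in> \<rat>\<close>] nuQ_onto_Rats[OF \<open>qb \<in> \<rat>\<close>] by blast
  ultimately have "z \<in> rat_interval (prod_encode (na, nb))"
    "rat_interval (prod_encode (na, nb)) \<subseteq> ball z d"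
    by (auto simp: rat_interval_def dist_real_def)
  then show ?thesis by blast
qed

definition closed_enum :: "(nat \<Rightarrow> nat) \<Rightarrow> baire" where
  "closed_enum t = interleave (\<lambda>k. if t k = 0 then Suc k else 0) (\<lambda>k. if t k = 0 then 0 else Suc k)"

lemma closed_name_closed_enum:
  assumes "closed A" and t: "\<And>k. t k \<noteq> 0 \<longleftrightarrow> rat_interval k \<inter> A \<noteq> {}"
  shows "closed_name (closed_enum t) A"
proof -
  have disjoint: "rat_interval k \<inter> A = {}" if "t k = 0" for k
    using t that by blast
  have "- A \<subseteq> \<Union>{rat_interval k | k. t k = 0}"
  proof
    fix z assume "z \<in> - A"
    moreover have "open (- A)" using \<open>closed A\<close> by (simp add: open_Compl)
    ultimately obtain d where "d > 0" "ball z d \<subseteq> - A"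
      using open_contains_ball by blast
    moreover obtain k where "z \<in> rat_interval k" "rat_interval k \<subseteq> ball z d"
      using rat_interval_in_ball[OF \<open>d > 0\<close>] by blast
    ultimately have "z \<in> rat_interval k" "rat_interval k \<inter> A = {}" by auto
    moreover from this(2) have "t k = 0" using t[of k] by blast
    ultimately show "z \<in> \<Union>{rat_interval k | k. t k = 0}" by blast
  qed
  moreover have "\<Union>{rat_interval k | k. t k = 0} \<subseteq> - A"
    using disjoint by blast
  moreover have "(\<exists>n. seq_even (closed_enum t) n = Suc k) \<longleftrightarrow> t k = 0" for k
    by (auto simp: closed_enum_def split: if_splits)
  moreover have "(\<exists>n. seq_odd (closed_enum t) n = Suc k) \<longleftrightarrow> rat_interval k \<inter> A \<noteq> {}" for k
    using t[of k] by (auto simp: closed_enum_def split: if_splits)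
  ultimately show ?thesis unfolding closed_name_def using \<open>closed A\<close> by (simp only:) blast
qed

section \<open>The reduction\<close>

definition signed_dyadic :: "nat \<Rightarrow> real" where
  "signed_dyadic j = (if even j then 1 else -1) * (1/2) ^ (j div 2)"

text \<open>2 and 1 are the \<open>int_encode\<close> codes of 1 and -1; the denominator is stored minus one.\<close>

definition signed_dyadic_code :: "nat \<Rightarrow> nat" where
  "signed_dyadic_code j = prod_encode (if even j then 2 else 1, 2 ^ (j div 2) - 1)"

lemma nuQ_signed_dyadic_code: "nuQ (signed_dyadic_code j) = signed_dyadic j"
proof -
  have "real (Suc (2 ^ (j div 2) - 1)) = 2 ^ (j div 2)" by simp
  then show ?thesis
    by (auto simp: signed_dyadic_code_def signed_dyadic_def nuQ_def int_decode_eq_if power_one_over)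
qed

definition llpo_point :: "baire \<Rightarrow> real" where
  "llpo_point p = (if \<exists>j. p j \<noteq> 0 then signed_dyadic (SOME j. p j \<noteq> 0) else 0)"

lemma llpo_point_eq:
  assumes "\<And>j. j \<noteq> j0 \<Longrightarrow> p j = 0"
  shows "llpo_point p = (if p j0 = 0 then 0 else signed_dyadic j0)"
proof (cases "p j0 = 0")
  case True
  then have "p j = 0" for j using assms by (cases "j = j0") simp_all
  then show ?thesis by (simp add: llpo_point_def)
next
  case False
  have "(SOME j. p j \<noteq> 0) = j0"
  proof (rule some_equality)
    show "j = j0" if "p j \<noteq> 0" for j
      using that assms by (rule contrapos_np)
  qed (rule False)
  then show ?thesis unfolding llpo_point_def using False by auto
qed

definition nonzero_index_sum :: "nat \<Rightarrow> baire \<Rightarrow> nat" where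
  "nonzero_index_sum i p = (\<Sum>j<i. if p j = 0 then 0 else Suc j)"

lemma nonzero_index_sum_eq:
  "(\<And>j. j \<noteq> j0 \<Longrightarrow> p j = 0)
    \<Longrightarrow> nonzero_index_sum i p = (if j0 < i \<and> p j0 \<noteq> 0 then Suc j0 else 0)"
proof -
  assume "\<And>j. j \<noteq> j0 \<Longrightarrow> p j = 0"
  then have "nonzero_index_sum i p = (\<Sum>j<i. if j = j0 then (if p j0 = 0 then 0 else Suc j0) else 0)"
    unfolding nonzero_index_sum_def by (intro sum.cong) auto
  then show ?thesis by simp
qed

lemma nonzero_index_sum_cong:
  "(\<And>j. j < i \<Longrightarrow> f j = g j) \<Longrightarrow> nonzero_index_sum i f = nonzero_index_sum i g"
  unfolding nonzero_index_sum_def by (intro sum.cong) auto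

lemma primrec_fn_nonzero_index_sum:
  assumes "primrec_fn n g1" "primrec_fn n g2"
  shows "primrec_fn n (\<lambda>xs. nonzero_index_sum (g1 xs) (code_nth (g2 xs)))"
proof -
  have rec: "nonzero_index_sum i p = rec_nat 0 (\<lambda>j r. r + (if p j = 0 then 0 else Suc j)) i" for i p
    by (induction i) (simp_all add: nonzero_index_sum_def)
  have "primrec_fn 3 (\<lambda>ys. ys ! 0 + (if code_nth (ys ! 2) (ys ! 1) = 0 then 0 else Suc (ys ! 1)))"
    by (intro primrec_fn_intros) simp_all
  from primrec_fn_rec_nat[OF primrec_fn_zero this]
  have "primrec_fn 2 (\<lambda>xs. nonzero_index_sum (xs ! 0) (code_nth (xs ! 1)))"
    by (simp add: rec cong: if_cong)
  from primrec_fn_app2[where h="\<lambda>a b. nonzero_index_sum a (code_nth b)", OF this assms]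
  show ?thesis .
qed

definition llpo_point_name :: "baire \<Rightarrow> baire" where
  "llpo_point_name p n = (if nonzero_index_sum (2 * n) p = 0 then 0
     else signed_dyadic_code (nonzero_index_sum (2 * n) p - 1))"

lemma cauchy_name_llpo_point_name:
  assumes "\<And>j. j \<noteq> j0 \<Longrightarrow> p j = 0"
  shows "cauchy_name (llpo_point_name p) (llpo_point p)"
  unfolding cauchy_name_def
proof
  fix n
  have "\<bar>signed_dyadic j0\<bar> \<le> (1/2) ^ n" if "\<not> j0 < 2 * n"
    using that by (auto simp: signed_dyadic_def intro: power_decreasing)
  then show "\<bar>nuQ (llpo_point_name p n) - llpo_point p\<bar> \<le> (1/2) ^ n"
    by (auto simp: llpo_point_name_def nonzero_index_sum_eq[OF assms] llpo_point_eq[OF assms]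
        nuQ_signed_dyadic_code nuQ_0)
qed

definition below_neg_one :: "nat \<Rightarrow> nat" where
  "below_neg_one a = (if even (fst (prod_decode a)) then 0
     else if snd (prod_decode a) < fst (prod_decode a) div 2 then 1 else 0)"

definition above_neg_one :: "nat \<Rightarrow> nat" where
  "above_neg_one b = (if even (fst (prod_decode b)) then 1
     else if fst (prod_decode b) div 2 < snd (prod_decode b) then 1 else 0)"

definition below_one :: "nat \<Rightarrow> nat" where
  "below_one a = (if even (fst (prod_decode a))
     then (if fst (prod_decode a) div 2 < Suc (snd (prod_decode a)) then 1 else 0) else 1)"

definition above_one :: "nat \<Rightarrow> nat" where
  "above_one b = (if even (fst (prod_decode b))
     then (if Suc (snd (prod_decode b)) < fst (prod_decode b) div 2 then 1 else 0) else 0)"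

definition meets_pm_one :: "nat \<Rightarrow> nat" where
  "meets_pm_one k = below_neg_one (fst (prod_decode k)) * above_neg_one (snd (prod_decode k))
     + below_one (fst (prod_decode k)) * above_one (snd (prod_decode k))"

lemma below_neg_one_iff: "below_neg_one a \<noteq> 0 \<longleftrightarrow> nuQ a < -1"
proof -
  obtain i j where pd: "prod_decode a = (i, j)" by force
  have "nuQ a < -1 \<longleftrightarrow> real_of_int (int_decode i) < - real (Suc j)"
    by (simp add: nuQ_eq pd divide_less_eq del: of_nat_Suc)
  also have "\<dots> \<longleftrightarrow> odd i \<and> j < i div 2"
    by (auto simp: int_decode_eq_if)
  finally show ?thesis by (auto simp: below_neg_one_def pd)
qed

lemma above_neg_one_iff: "above_neg_one b \<noteq> 0 \<longleftrightarrow> -1 < nuQ b"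
proof -
  obtain i j where pd: "prod_decode b = (i, j)" by force
  have "-1 < nuQ b \<longleftrightarrow> - real (Suc j) < real_of_int (int_decode i)"
    by (simp add: nuQ_eq pd less_divide_eq del: of_nat_Suc)
  also have "\<dots> \<longleftrightarrow> even i \<or> i div 2 < j"
    by (auto simp: int_decode_eq_if)
  finally show ?thesis by (auto simp: above_neg_one_def pd)
qed

lemma below_one_iff: "below_one a \<noteq> 0 \<longleftrightarrow> nuQ a < 1"
proof -
  obtain i j where pd: "prod_decode a = (i, j)" by force
  have "nuQ a < 1 \<longleftrightarrow> real_of_int (int_decode i) < real (Suc j)"
    by (simp add: nuQ_eq pd divide_less_eq del: of_nat_Suc)
  also have "\<dots> \<longleftrightarrow> odd i \<or> i div 2 < Suc j"
    by (auto simp: int_decode_eq_if)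
  finally show ?thesis by (auto simp: below_one_def pd)
qed

lemma above_one_iff: "above_one b \<noteq> 0 \<longleftrightarrow> 1 < nuQ b"
proof -
  obtain i j where pd: "prod_decode b = (i, j)" by force
  have "1 < nuQ b \<longleftrightarrow> real (Suc j) < real_of_int (int_decode i)"
    by (simp add: nuQ_eq pd less_divide_eq del: of_nat_Suc)
  also have "\<dots> \<longleftrightarrow> even i \<and> Suc j < i div 2"
    by (auto simp: int_decode_eq_if)
  finally show ?thesis by (auto simp: above_one_def pd)
qed

lemma meets_pm_one_iff: "meets_pm_one k \<noteq> 0 \<longleftrightarrow> rat_interval k \<inter> {-1, 1} \<noteq> {}"
proof -
  obtain a b where pd: "prod_decode k = (a, b)" by force
  have "rat_interval k \<inter> {-1, 1} \<noteq> {}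
      \<longleftrightarrow> (nuQ a < -1 \<and> -1 < nuQ b) \<or> (nuQ a < 1 \<and> 1 < nuQ b)"
    by (auto simp: rat_interval_def pd)
  then show ?thesis
    using below_neg_one_iff[of a] above_neg_one_iff[of b] below_one_iff[of a] above_one_iff[of b]
    by (auto simp: meets_pm_one_def pd)
qed

lemma primrec_fn_meets_pm_one:
  assumes "primrec_fn n g" shows "primrec_fn n (\<lambda>xs. meets_pm_one (g xs))"
  unfolding meets_pm_one_def below_neg_one_def above_neg_one_def below_one_def above_one_def
  by (intro primrec_fn_intros assms)

definition proj_instance :: "baire \<Rightarrow> baire" where
  "proj_instance p = interleave (llpo_point_name p) (closed_enum meets_pm_one)"

lemma rep_proj_instance:
  assumes "\<And>j. j \<noteq> j0 \<Longrightarrow> p j = 0"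
  shows "rep_prod cauchy_rep rep_closed (proj_instance p) = Some (llpo_point p, {-1, 1})"
  unfolding proj_instance_def
  by (intro rep_prod_interleave cauchy_rep_eqI rep_closed_eqI cauchy_name_llpo_point_name
      closed_name_closed_enum assms meets_pm_one_iff) simp_all

lemma computable_proj_instance: "computable_partial (\<lambda>p. Some (proj_instance p))"
proof -
  have "primrec_fn 2 (\<lambda>xs. proj_instance (code_nth (xs ! 1)) (xs ! 0))"
    unfolding proj_instance_def interleave_def llpo_point_name_def closed_enum_def
      signed_dyadic_code_def
    by (intro primrec_fn_intros primrec_fn_nonzero_index_sum primrec_fn_meets_pm_one) simp_all
  moreover have "primrec_fn 1 (\<lambda>xs. xs ! 0)" by (rule primrec_fn_proj) simp
  moreover have "proj_instance f i = proj_instance g i"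
    if "i < l" "\<And>j. j < l \<Longrightarrow> f j = g j" for i f g l
  proof -
    have "nonzero_index_sum (2 * (i div 2)) f = nonzero_index_sum (2 * (i div 2)) g"
      using that by (intro nonzero_index_sum_cong) auto
    then show ?thesis unfolding proj_instance_def interleave_def llpo_point_name_def
      by (simp only:)
  qed
  moreover have "mono (\<lambda>l::nat. l)" by (rule monoI)
  ultimately show ?thesis
    using computable_partial_pointwise[of "\<lambda>i p. proj_instance p i" "\<lambda>l. l"] by blast
qed

definition sign_answer :: "baire \<Rightarrow> baire" where
  "sign_answer q = (\<lambda>_. if even (fst (prod_decode (q 1))) then 1 else 0)"

lemma sign_answer_eq:
  assumes "cauchy_name q y" "y \<in> {-1, 1}"
  shows "sign_answer q k = (if y = 1 then 1 else 0)"
proof -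
  have "\<bar>nuQ (q 1) - y\<bar> \<le> 1/2"
    using assms(1) unfolding cauchy_name_def by (metis power_one_right)
  then have "y - 1/2 \<le> nuQ (q 1)" "nuQ (q 1) \<le> y + 1/2" unfolding abs_le_iff by linarith+
  then have "0 \<le> nuQ (q 1) \<longleftrightarrow> y = 1" using assms(2) by auto
  then show ?thesis by (simp add: sign_answer_def nuQ_nonneg_iff)
qed

lemma computable_sign_answer: "computable_partial (\<lambda>q. Some (sign_answer q))"
proof -
  have "primrec_fn 2 (\<lambda>xs. sign_answer (code_nth (xs ! 1)) (xs ! 0))"
    unfolding sign_answer_def by (intro primrec_fn_intros) simp_all
  moreover have "primrec_fn 1 (\<lambda>xs. xs ! 0 - 1)" by (intro primrec_fn_intros) simp
  moreover have "mono (\<lambda>l::nat. l - 1)" by (rule monoI) (rule diff_le_mono)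
  moreover have "\<exists>n. k < n - 1" for k :: nat by (rule exI[of _ "k + 2"]) simp
  ultimately show ?thesis
    using computable_partial_pointwise[of "\<lambda>i q. sign_answer q i" "\<lambda>l. l - 1"]
    by (simp add: sign_answer_def)
qed

lemma Proj_R_nonempty:
  assumes "closed A" "A \<noteq> {}" shows "Proj_R (x, A) \<noteq> {}"
proof -
  obtain y where "y \<in> A" "infdist x A = dist x y"
    using infdist_attains_inf[OF assms] by blast
  then show ?thesis using assms by (auto simp: Proj_R_def dist_real_def)
qed

lemma Proj_R_pm_one:
  assumes "y \<in> Proj_R (x, {-1, 1})" and "x \<noteq> 0"
  shows "y = sgn x"
proof -
  have y: "y = 1 \<or> y = -1" and "\<bar>x - y\<bar> = infdist x {-1, 1}"
    using assms(1) by (auto simp: Proj_R_def)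
  then have "\<bar>x - y\<bar> \<le> \<bar>x - 1\<bar>" "\<bar>x - y\<bar> \<le> \<bar>x + 1\<bar>"
    using infdist_le[of 1 "{-1, 1}" x] infdist_le[of "-1" "{-1, 1}" x] by (auto simp: dist_real_def)
  then show ?thesis using y assms(2) by (auto simp: sgn_if)
qed

lemma LLPO_iff:
  "at_most_one_nonzero p0 p1
    \<Longrightarrow> i \<in> LLPO (p0, p1) \<longleftrightarrow> i \<le> 1 \<and> (if i = 0 then p0 else p1) = (\<lambda>_. 0)"
  by (simp add: LLPO_def)

lemma at_most_one_nonzero_interleaved:
  assumes "at_most_one_nonzero (seq_even p) (seq_odd p)"
  obtains j0 where "\<And>j. j \<noteq> j0 \<Longrightarrow> p j = 0"
proof -
  have p: "p j = (if j mod 2 = 0 then seq_even p else seq_odd p) (j div 2)" for j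
  proof (cases "even j")
    case True
    then show ?thesis using even_two_times_div_two[OF True] by (simp add: seq_even_def)
  next
    case False
    then show ?thesis
      using odd_two_times_div_two_succ[OF False] by (simp add: seq_odd_def odd_iff_mod_2_eq_one)
  qed
  have unique: "j = j'" if "p j \<noteq> 0" "p j' \<noteq> 0" for j j'
  proof -
    have "k mod 2 \<le> (1::nat)" for k by presburger
    then have "j mod 2 = j' mod 2 \<and> j div 2 = j' div 2"
      using assms[unfolded at_most_one_nonzero_def, rule_format,
          of "j mod 2" "j' mod 2" "j div 2" "j' div 2"] that p[of j] p[of j']
      by simp
    then show ?thesis by (metis div_mult_mod_eq)
  qed
  show ?thesis
  proof (cases "\<exists>j. p j \<noteq> 0")
    case True
    then obtain j0 where "p j0 \<noteq> 0" by blast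
    show ?thesis by (rule that[of j0]) (use unique \<open>p j0 \<noteq> 0\<close> in blast)
  qed (use that in blast)
qed

lemma sign_answer_solves_LLPO:
  assumes "at_most_one_nonzero (seq_even p) (seq_odd p)" and p: "\<And>j. j \<noteq> j0 \<Longrightarrow> p j = 0"
    and "cauchy_name q y" "y \<in> Proj_R (llpo_point p, {-1, 1})"
  shows "sign_answer q 0 \<in> LLPO (seq_even p, seq_odd p)"
proof (cases "p j0 = 0")
  case True
  then have "p j = 0" for j using p by (cases "j = j0") simp_all
  then have "seq_even p = (\<lambda>_. 0)" "seq_odd p = (\<lambda>_. 0)"
    by (simp_all add: seq_even_def seq_odd_def)
  then show ?thesis using assms(1) by (simp add: LLPO_iff sign_answer_def)
next
  case False
  then have "y = sgn (signed_dyadic j0)"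
    using Proj_R_pm_one[OF assms(4)] llpo_point_eq[OF p] by (simp add: signed_dyadic_def)
  then have y: "y = (if even j0 then 1 else -1)" by (simp add: signed_dyadic_def sgn_mult)
  have "seq_odd p = (\<lambda>_. 0)" if "even j0"
  proof
    fix m
    have "2 * m + 1 \<noteq> j0" using that by auto
    then show "seq_odd p m = 0" using p by (simp add: seq_odd_def)
  qed
  moreover have "seq_even p = (\<lambda>_. 0)" if "odd j0"
  proof
    fix m
    have "2 * m \<noteq> j0" using that by auto
    then show "seq_even p m = 0" using p by (simp add: seq_even_def)
  qed
  ultimately show ?thesis
    using assms(1) sign_answer_eq[OF assms(3), of 0] y by (auto simp: LLPO_iff)
qed

lemma realizer_LLPO_via_Proj_R:
  assumes "realizer (rep_prod cauchy_rep rep_closed) cauchy_rep Proj_R G"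
  shows "realizer (rep_prod rep_baire rep_baire) rep_nat LLPO
    (\<lambda>p. Option.bind (Some (proj_instance p)) (\<lambda>r. Option.bind (G r) (\<lambda>q. Some (sign_answer q))))"
  unfolding realizer_def
proof (intro allI impI, elim conjE)
  fix p x
  assume "rep_prod rep_baire rep_baire p = Some x" and "LLPO x \<noteq> {}"
  then have x: "x = (seq_even p, seq_odd p)" and amo: "at_most_one_nonzero (seq_even p) (seq_odd p)"
    by (auto simp: rep_prod_def rep_baire_def LLPO_def split: if_splits)
  obtain j0 where p: "\<And>j. j \<noteq> j0 \<Longrightarrow> p j = 0"
    using at_most_one_nonzero_interleaved[OF amo] by blast
  have "Proj_R (llpo_point p, {-1, 1}) \<noteq> {}" by (simp add: Proj_R_nonempty)
  then obtain q y where "G (proj_instance p) = Some q" "cauchy_rep q = Some y"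
      "y \<in> Proj_R (llpo_point p, {-1, 1})"
    using assms rep_proj_instance[of j0 p, OF p] unfolding realizer_def by blast
  with sign_answer_solves_LLPO[of p j0, OF amo p cauchy_rep_SomeD] show
    "\<exists>q y. Option.bind (Some (proj_instance p)) (\<lambda>r. Option.bind (G r) (\<lambda>q. Some (sign_answer q)))
      = Some q \<and> rep_nat q = Some y \<and> y \<in> LLPO x"
    by (auto simp: x rep_nat_def)
qed

theorem proposition4p20:
  shows "sW_reducible (rep_prod rep_baire rep_baire) rep_nat LLPO
                      (rep_prod cauchy_rep rep_closed) cauchy_rep Proj_R"
  unfolding sW_reducible_def
  using computable_sign_answer computable_proj_instance realizer_LLPO_via_Proj_R by blast

end
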